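(* Let $\mu,\nu$ be Borel probability measures on $[0,1)$ such that $\mu$ does not charge the boundaries of dyadic intervals ($\mu(\{j2^{-k}\})=0$ for all integers $j,k\ge0$) and $\nu$ is dyadically doubling with constant $D_\nu$: $\nu(\hat I)\le D_\nu\nu(I)$ for $I\in\mathcal{D}\setminus\{[0,1)\}$. Let $\mathcal{T}\subset\mathcal{D}$ be a tree and assume $\mu$ is $(\mathcal{T},D)$-doubling for some $D\ge1$. Then there is a constant $C$ depending only on $D_\nu$ and $D$ such that $$\sum_{I\in\mathcal{T}}\Delta^2_{\mu,\nu}(I)\mu(I) \leq C\Big(\sum_{I\in\mathcal{T}\setminus\mathbf{Leaves}(\mathcal{T})}\alpha^2_{\mu,\nu}(I)\mu(I) + \mu(\mathbf{Top}(\mathcal{T}))\Big).$$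
   Context: $\mathcal{D}$: dyadic intervals $[j2^{-k},(j+1)2^{-k})\subset[0,1)$, $k\ge0$; $\hat I$ is the parent of $I$, and $I_-,I_+$ are the left and right halves (children) of $I$. $\Delta_{\mu,\nu}(I) := |\mu(I_-)/\mu(I) - \nu(I_-)/\nu(I)|$ (with the convention $\Delta_{\mu,\nu}(I)\mu(I):=0$ if $\mu(I)=0$). Wasserstein distance: $\mathbb{W}_1(\nu_1,\nu_2) := \sup_\psi |\int\psi\,d\nu_1 - \int\psi\,d\nu_2|$ over $1$-Lipschitz $\psi\colon\mathbb{R}\to\mathbb{R}$ supported on $[0,1]$; $T_I$ is the increasing affine map from $\overline I$ onto $[0,1]$, $\mu_I := T_{I\sharp}(\mu|_I)/\mu(I)$, $\nu_I := T_{I\sharp}(\nu|_I)/\nu(I)$ (zero if the mass vanishes), $\alpha_{\mu,\nu}(I) := \mathbb{W}_1(\mu_I,\nu_I)$. A tree is a family $\mathcal{T}\subset\mathcal{D}$ that is coherent (if $Q,R\in\mathcal{T}$, $P\in\mathcal{D}$, $Q\subset P\subset R$, then $P\in\mathcal{T}$), has a unique largest element $\mathbf{Top}(\mathcal{T})$, and in which every $I\in\mathcal{T}$ has either $0$ or $2$ of its children in $\mathcal{T}$. $\mathbf{Leaves}(\mathcal{T})$ is the set of $I\in\mathcal{T}$ having no children in $\mathcal{T}$. $\mu$ is $(\mathcal{T},D)$-doubling if $\mu(\hat I)\le D\mu(I)$ for all $I\in\mathcal{T}\setminus\{\mathbf{Top}(\mathcal{T})\}$. *)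

theory Defs
  imports "HOL-Probability.Probability"
begin

text \<open>Dyadic intervals are indexed by pairs (k, j) with j < 2^k, denoting
  the interval [j 2^-k, (j+1) 2^-k).\<close>

definition dyadic :: "(nat \<times> nat) set" where
  "dyadic = {(k, j). j < 2 ^ k}"

fun dy :: "nat \<times> nat \<Rightarrow> real set" where
  "dy (k, j) = {real j / 2 ^ k ..< (real j + 1) / 2 ^ k}"

fun dleft :: "nat \<times> nat \<Rightarrow> nat \<times> nat" where
  "dleft (k, j) = (Suc k, 2 * j)"

fun dright :: "nat \<times> nat \<Rightarrow> nat \<times> nat" where
  "dright (k, j) = (Suc k, 2 * j + 1)"

fun dparent :: "nat \<times> nat \<Rightarrow> nat \<times> nat" where
  "dparent (k, j) = (k - 1, j div 2)"

fun Tmap :: "nat \<times> nat \<Rightarrow> real \<Rightarrow> real" where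
  "Tmap (k, j) x = 2 ^ k * x - real j"

definition is_tree :: "(nat \<times> nat) set \<Rightarrow> bool" where
  "is_tree T \<longleftrightarrow> T \<subseteq> dyadic
     \<and> (\<forall>Q\<in>T. \<forall>R\<in>T. \<forall>P\<in>dyadic. dy Q \<subseteq> dy P \<and> dy P \<subseteq> dy R \<longrightarrow> P \<in> T)
     \<and> (\<exists>!Top\<in>T. \<forall>I\<in>T. dy I \<subseteq> dy Top)
     \<and> (\<forall>I\<in>T. (dleft I \<in> T \<and> dright I \<in> T) \<or> (dleft I \<notin> T \<and> dright I \<notin> T))"

definition tree_top :: "(nat \<times> nat) set \<Rightarrow> nat \<times> nat" where
  "tree_top T = (THE Top. Top \<in> T \<and> (\<forall>I\<in>T. dy I \<subseteq> dy Top))"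

definition leaves :: "(nat \<times> nat) set \<Rightarrow> (nat \<times> nat) set" where
  "leaves T = {I \<in> T. dleft I \<notin> T \<and> dright I \<notin> T}"

definition tree_doubling :: "(nat \<times> nat) set \<Rightarrow> real \<Rightarrow> real measure \<Rightarrow> bool" where
  "tree_doubling T D \<mu> \<longleftrightarrow>
     (\<forall>I\<in>T - {tree_top T}. measure \<mu> (dy (dparent I)) \<le> D * measure \<mu> (dy I))"

definition dyadic_doubling :: "real \<Rightarrow> real measure \<Rightarrow> bool" where
  "dyadic_doubling D \<nu> \<longleftrightarrow>
     (\<forall>I\<in>dyadic - {(0, 0)}. measure \<nu> (dy (dparent I)) \<le> D * measure \<nu> (dy I))"

text \<open>Delta; note x / 0 = 0 in Isabelle, so Delta^2 * mu(I) = 0 when mu(I) = 0.\<close>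
definition Delta :: "real measure \<Rightarrow> real measure \<Rightarrow> nat \<times> nat \<Rightarrow> real" where
  "Delta \<mu> \<nu> I = \<bar>measure \<mu> (dy (dleft I)) / measure \<mu> (dy I)
                   - measure \<nu> (dy (dleft I)) / measure \<nu> (dy I)\<bar>"

text \<open>Normalized push-forward of the restriction of a measure to I
  (the zero measure if the mass of I vanishes).\<close>
definition blowup :: "real measure \<Rightarrow> nat \<times> nat \<Rightarrow> real measure" where
  "blowup \<mu> I = distr (density \<mu> (\<lambda>x. ennreal (indicator (dy I) x / measure \<mu> (dy I))))
                      borel (Tmap I)"

definition W1 :: "real measure \<Rightarrow> real measure \<Rightarrow> real" where
  "W1 \<nu>1 \<nu>2 = (SUP \<psi> \<in> {\<psi> :: real \<Rightarrow> real. 1-lipschitz_on UNIV \<psi> \<and> (\<forall>x. x \<notin> {0..1} \<longrightarrow> \<psi> x = 0)}.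
                 \<bar>integral\<^sup>L \<nu>1 \<psi> - integral\<^sup>L \<nu>2 \<psi>\<bar>)"

definition alpha :: "real measure \<Rightarrow> real measure \<Rightarrow> nat \<times> nat \<Rightarrow> real" where
  "alpha \<mu> \<nu> I = W1 (blowup \<mu> I) (blowup \<nu> I)"

end

theory Submission
  imports Defs
begin

text \<open>Test the blow-ups of \<open>\<mu>\<close> and \<open>\<nu>\<close> on a dyadic interval \<open>I\<close> with the odd Lipschitz
  function that is half the tent over the right child minus half the tent over the left child,
  and on the two children with the tent itself. The three tests, each bounded by the
  corresponding \<open>\<alpha>\<close>, determine the difference of the proportions of mass in the left child,
  \<open>\<Delta>(I)\<close>, up to the factor \<open>1/c\<close>, where \<open>c\<close> bounds the normalized tent integrals of \<open>\<nu>\<close> from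
  below; doubling of \<open>\<nu>\<close> gives \<open>c = 1/(4 D\<^sub>\<nu>\<^sup>2)\<close>. Hence
  \<open>\<Delta>\<^sup>2(I) \<mu>(I) \<lesssim> \<alpha>\<^sup>2(I) \<mu>(I) + \<alpha>\<^sup>2(I\<^sub>-) \<mu>(I\<^sub>-) + \<alpha>\<^sup>2(I\<^sub>+) \<mu>(I\<^sub>+)\<close>.
  Summing over the tree, the terms of the leaves and of the children of leaves do not appear on
  the right-hand side of the theorem; but the leaves are pairwise disjoint, and so are their
  children, and \<open>\<alpha> \<le> 4\<close>, so these terms contribute at most a multiple of \<open>\<mu>(Top)\<close>.\<close>

section \<open>Dyadic intervals\<close>

lemma mem_dy_iff_floor: "x \<in> dy (k, j) \<longleftrightarrow> \<lfloor>2 ^ k * x\<rfloor> = int j"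
proof -
  have "x \<in> dy (k, j) \<longleftrightarrow> real j \<le> 2 ^ k * x \<and> 2 ^ k * x < real j + 1"
    by (simp add: divide_le_eq less_divide_eq mult.commute)
  then show ?thesis
    by (simp add: floor_eq_iff)
qed

lemma dy_borel [measurable]: "dy I \<in> sets borel"
  by (cases I) simp

declare dy.simps [simp del]

lemma floor_pow2_mult_eq_div:
  "k \<le> k' \<Longrightarrow> \<lfloor>2 ^ k * x\<rfloor> = \<lfloor>2 ^ k' * (x::real)\<rfloor> div 2 ^ (k' - k)"
proof -
  assume "k \<le> k'"
  then have "(2::real) ^ k' = 2 ^ k * 2 ^ (k' - k)"
    by (simp flip: power_add)
  then have "2 ^ k * x = (2 ^ k' * x) / real_of_int (2 ^ (k' - k))"
    by simp
  then show ?thesis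
    by (metis floor_divide_real_eq_div zero_le_power zero_le_numeral)
qed

lemma dy_subset_dy: "k \<le> k' \<Longrightarrow> j' div 2 ^ (k' - k) = j \<Longrightarrow> dy (k', j') \<subseteq> dy (k, j)"
  by (auto simp: mem_dy_iff_floor floor_pow2_mult_eq_div[of k k'] zdiv_int)

lemma dy_overlap_imp_div:
  "k \<le> k' \<Longrightarrow> x \<in> dy (k, j) \<Longrightarrow> x \<in> dy (k', j') \<Longrightarrow> j' div 2 ^ (k' - k) = j"
proof -
  assume "k \<le> k'" "x \<in> dy (k, j)" "x \<in> dy (k', j')"
  then have "int j = int j' div 2 ^ (k' - k)"
    using floor_pow2_mult_eq_div[of k k' x] by (simp add: mem_dy_iff_floor)
  also have "\<dots> = int (j' div 2 ^ (k' - k))"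
    by (simp add: zdiv_int)
  finally show ?thesis
    by linarith
qed

lemma dy_children_Un: "dy (dleft I) \<union> dy (dright I) = dy I"
proof -
  obtain k j where I: "I = (k, j)"
    by fastforce
  have "(n::int) div 2 = int j \<longleftrightarrow> n = int (2 * j) \<or> n = int (2 * j + 1)" for n
    by presburger
  then have "x \<in> dy (k, j) \<longleftrightarrow> x \<in> dy (Suc k, 2 * j) \<or> x \<in> dy (Suc k, 2 * j + 1)" for x
    using floor_pow2_mult_eq_div[of k "Suc k" x] unfolding mem_dy_iff_floor by simp
  then show ?thesis
    unfolding I by auto
qed

lemma dy_children_disjoint: "dy (dleft I) \<inter> dy (dright I) = {}"
  using dy_overlap_imp_div[of "Suc (fst I)" "Suc (fst I)" _ "2 * snd I" "2 * snd I + 1"]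
  by (cases I) auto

lemma dy_dleft_subset: "dy (dleft I) \<subseteq> dy I"
  and dy_dright_subset: "dy (dright I) \<subseteq> dy I"
  using dy_children_Un[of I] by blast+

lemma dleft_in_dyadic: "I \<in> dyadic \<Longrightarrow> dleft I \<in> dyadic"
  and dright_in_dyadic: "I \<in> dyadic \<Longrightarrow> dright I \<in> dyadic"
  by (cases I; auto simp: dyadic_def)+

lemma inj_dleft: "inj dleft"
  and inj_dright: "inj dright"
  by (auto intro!: injI elim!: dleft.elims dright.elims)

lemma dleft_neq_dright: "dleft I \<noteq> dright J"
  by (cases I, cases J) (auto, presburger)

lemma dparent_dleft [simp]: "dparent (dleft I) = I"
  and dparent_dright [simp]: "dparent (dright I) = I"
  by (cases I; simp)+

lemma dleft_neq_top: "dleft I \<noteq> (0, 0)"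
  and dright_neq_top: "dright I \<noteq> (0, 0)"
  by (cases I; simp)+

section \<open>Trees\<close>

lemma dy_subset_tree_top:
  assumes "is_tree T" and "I \<in> T"
  shows "dy I \<subseteq> dy (tree_top T)"
proof -
  have "\<exists>!Top. Top \<in> T \<and> (\<forall>I\<in>T. dy I \<subseteq> dy Top)"
    using assms(1) unfolding is_tree_def by blast
  then have "tree_top T \<in> T \<and> (\<forall>I\<in>T. dy I \<subseteq> dy (tree_top T))"
    unfolding tree_top_def by (rule theI')
  then show ?thesis
    using assms(2) by blast
qed

text \<open>Otherwise the ancestor of the deeper interval one level below the leaf would lie in the
  tree by coherence, and it is a child of the leaf.\<close>

lemma tree_leaf_overlap_deeper:
  assumes T: "is_tree T" and L: "(k, j) \<in> leaves T" and J: "(k', j') \<in> T" and "k \<le> k'"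
    and "x \<in> dy (k, j)" "x \<in> dy (k', j')"
  shows "(k', j') = (k, j)"
proof -
  have div: "j' div 2 ^ (k' - k) = j"
    using dy_overlap_imp_div assms by blast
  have coherent: "\<And>Q R P. Q \<in> T \<Longrightarrow> R \<in> T \<Longrightarrow> P \<in> dyadic \<Longrightarrow> dy Q \<subseteq> dy P \<Longrightarrow> dy P \<subseteq> dy R \<Longrightarrow> P \<in> T"
    and "T \<subseteq> dyadic"
    using T unfolding is_tree_def by blast+
  show ?thesis
  proof (rule ccontr)
    assume "(k', j') \<noteq> (k, j)"
    with div have lt: "Suc k \<le> k'"
      using \<open>k \<le> k'\<close> by (cases "k = k'") auto
    define n where "n = j' div 2 ^ (k' - Suc k)"
    have "(2::nat) ^ (k' - Suc k) * 2 = 2 ^ (k' - k)"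
      using lt by (simp flip: power_Suc2 add: Suc_diff_Suc)
    then have n_div: "n div 2 = j"
      using div by (simp add: n_def flip: div_mult2_eq)
    have "j' < 2 ^ k'"
      using J \<open>T \<subseteq> dyadic\<close> by (auto simp: dyadic_def)
    moreover have "(2::nat) ^ Suc k * 2 ^ (k' - Suc k) = 2 ^ k'"
      using lt by (metis le_add_diff_inverse power_add)
    ultimately have "n < 2 ^ Suc k"
      unfolding n_def by (metis div_less_iff_less_mult zero_less_numeral zero_less_power)
    then have "(Suc k, n) \<in> dyadic"
      by (simp add: dyadic_def)
    moreover have "dy (k', j') \<subseteq> dy (Suc k, n)"
      using dy_subset_dy[OF lt] by (simp add: n_def)
    moreover have "dy (Suc k, n) \<subseteq> dy (k, j)"
      using dy_subset_dy[of k "Suc k" n j] n_div by simp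
    moreover have "(k, j) \<in> T"
      using L by (simp add: leaves_def)
    ultimately have "(Suc k, n) \<in> T"
      using coherent J by blast
    moreover have "n = 2 * j \<or> n = 2 * j + 1"
      using n_div by presburger
    ultimately show False
      using L by (auto simp: leaves_def)
  qed
qed

lemma disjoint_family_leaves:
  assumes "is_tree T"
  shows "disjoint_family_on dy (leaves T)"
  unfolding disjoint_family_on_def
proof (intro ballI impI, rule ccontr)
  fix L1 L2
  assume L: "L1 \<in> leaves T" "L2 \<in> leaves T" "L1 \<noteq> L2" and "dy L1 \<inter> dy L2 \<noteq> {}"
  then obtain x where "x \<in> dy L1" "x \<in> dy L2"
    by blast
  moreover have "L1 \<in> T" "L2 \<in> T"
    using L by (auto simp: leaves_def)
  ultimately show False
    using tree_leaf_overlap_deeper[OF assms] L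
    by (cases L1, cases L2, cases "fst L1 \<le> fst L2") force+
qed

lemma children_outside_tree:
  assumes "is_tree T" and "J \<in> (dleft ` T \<union> dright ` T) - T"
  obtains L where "L \<in> leaves T" "J = dleft L \<or> J = dright L"
  using assms unfolding is_tree_def leaves_def by blast

lemma disjoint_family_children_outside_tree:
  assumes T: "is_tree T"
  shows "disjoint_family_on dy ((dleft ` T \<union> dright ` T) - T)"
  unfolding disjoint_family_on_def
proof (intro ballI impI)
  fix J1 J2
  assume J: "J1 \<in> (dleft ` T \<union> dright ` T) - T" "J2 \<in> (dleft ` T \<union> dright ` T) - T" "J1 \<noteq> J2"
  obtain L1 where L1: "L1 \<in> leaves T" "J1 = dleft L1 \<or> J1 = dright L1"
    using children_outside_tree[OF T J(1)] .
  obtain L2 where L2: "L2 \<in> leaves T" "J2 = dleft L2 \<or> J2 = dright L2"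
    using children_outside_tree[OF T J(2)] .
  show "dy J1 \<inter> dy J2 = {}"
  proof (cases "L1 = L2")
    case True
    then show ?thesis
      using L1 L2 J(3) dy_children_disjoint[of L1] by auto
  next
    case False
    then have "dy L1 \<inter> dy L2 = {}"
      using disjoint_family_leaves[OF T] L1 L2 by (auto simp: disjoint_family_on_def)
    then show ?thesis
      using L1(2) L2(2) dy_dleft_subset dy_dright_subset by blast
  qed
qed

definition lip_tests :: "(real \<Rightarrow> real) set" where
  "lip_tests = {\<psi>. 1-lipschitz_on UNIV \<psi> \<and> (\<forall>x. x \<notin> {0..1} \<longrightarrow> \<psi> x = 0)}"

lemma alpha_eq_SUP_lip_tests:
  "alpha \<mu> \<nu> I = (SUP \<psi>\<in>lip_tests. \<bar>integral\<^sup>L (blowup \<mu> I) \<psi> - integral\<^sup>L (blowup \<nu> I) \<psi>\<bar>)"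
  unfolding alpha_def W1_def lip_tests_def ..

lemma lip_tests_borel_measurable: "\<psi> \<in> lip_tests \<Longrightarrow> \<psi> \<in> borel_measurable borel"
  unfolding lip_tests_def by (auto intro: borel_measurable_continuous_onI lipschitz_on_continuous_on)

lemma abs_lip_tests_le: "\<psi> \<in> lip_tests \<Longrightarrow> \<bar>\<psi> x\<bar> \<le> 2"
proof -
  assume "\<psi> \<in> lip_tests"
  then have lip: "1-lipschitz_on UNIV \<psi>" and vanish: "\<And>x. x \<notin> {0..1} \<Longrightarrow> \<psi> x = 0"
    unfolding lip_tests_def by auto
  show ?thesis
  proof (cases "x \<in> {0..1}")
    case True
    have "dist (\<psi> x) (\<psi> (-1)) \<le> 1 * dist x (-1)"
      using lip by (rule lipschitz_onD) auto
    then show ?thesis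
      using True vanish[of "-1"] by (simp add: dist_real_def)
  qed (simp add: vanish)
qed

definition tent :: "real \<Rightarrow> real" where
  "tent x = max 0 (min x (1 - x))"

definition haar_tent :: "real \<Rightarrow> real" where
  "haar_tent x = (if x < 1/2 then - tent (2 * x) / 2 else tent (2 * x - 1) / 2)"

lemma tent_nonneg: "0 \<le> tent x"
  and tent_le_1: "tent x \<le> 1"
  by (auto simp: tent_def)

lemma lipschitz_tent: "1-lipschitz_on UNIV tent"
  by (rule lipschitz_onI) (auto simp: tent_def dist_real_def max_def min_def abs_if)

lemma tent_in_lip_tests: "tent \<in> lip_tests"
  unfolding lip_tests_def using lipschitz_tent by (auto simp: tent_def)

lemma lipschitz_haar_tent: "1-lipschitz_on UNIV haar_tent"
proof (rule lipschitz_onI)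
  have tent_lip: "\<bar>tent a - tent b\<bar> \<le> \<bar>a - b\<bar>" for a b
    using lipschitz_onD[OF lipschitz_tent, of a b] by (simp add: dist_real_def)
  have ordered: "\<bar>haar_tent x - haar_tent y\<bar> \<le> \<bar>x - y\<bar>" if "x \<le> y" for x y
  proof (cases "x < 1/2"; cases "y < 1/2")
    assume "x < 1/2" "\<not> y < 1/2"
    moreover have "tent (2 * x) \<le> 1 - 2 * x" "tent (2 * y - 1) \<le> 2 * y - 1"
      using \<open>x < 1/2\<close> \<open>\<not> y < 1/2\<close> by (auto simp: tent_def)
    ultimately show ?thesis
      using tent_nonneg[of "2 * x"] tent_nonneg[of "2 * y - 1"] by (simp add: haar_tent_def abs_if)
  qed (use that tent_lip[of "2 * x" "2 * y"] tent_lip[of "2 * x - 1" "2 * y - 1"] in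
       \<open>auto simp: haar_tent_def\<close>)
  fix x y :: real
  show "dist (haar_tent x) (haar_tent y) \<le> 1 * dist x y"
    using ordered[of x y] ordered[of y x] by (cases "x \<le> y") (auto simp: dist_real_def abs_minus_commute)
qed simp

lemma haar_tent_in_lip_tests: "haar_tent \<in> lip_tests"
  unfolding lip_tests_def using lipschitz_haar_tent by (auto simp: haar_tent_def tent_def)

lemma Tmap_borel [measurable]: "Tmap J \<in> borel_measurable borel"
proof -
  obtain k j where "J = (k, j)"
    by fastforce
  then have "Tmap J = (\<lambda>x. 2 ^ k * x - real j)"
    by (simp add: fun_eq_iff)
  then show ?thesis
    by simp
qed

definition dyadic_integral :: "real measure \<Rightarrow> nat \<times> nat \<Rightarrow> (real \<Rightarrow> real) \<Rightarrow> real" where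
  "dyadic_integral \<rho> J g = (\<integral>x. indicator (dy J) x * g (Tmap J x) \<partial>\<rho>)"

lemma borel_measurable_indicator_dy_Tmap:
  fixes g :: "real \<Rightarrow> real"
  assumes "sets \<rho> = sets borel" and [measurable]: "g \<in> borel_measurable borel"
  shows "(\<lambda>x. indicator (dy J) x * g (Tmap J x)) \<in> borel_measurable \<rho>"
  by (subst measurable_cong_sets[OF assms(1) refl]) measurable

lemma integral_blowup:
  fixes g :: "real \<Rightarrow> real"
  assumes sets: "sets \<rho> = sets borel" and [measurable]: "g \<in> borel_measurable borel"
  shows "integral\<^sup>L (blowup \<rho> J) g = dyadic_integral \<rho> J g / measure \<rho> (dy J)"
proof -
  define h where "h x = indicator (dy J) x / measure \<rho> (dy J)" for x
  have h_meas: "h \<in> borel_measurable \<rho>"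
    unfolding h_def by (subst measurable_cong_sets[OF sets refl]) measurable
  have "Tmap J \<in> measurable (density \<rho> (\<lambda>x. ennreal (h x))) borel"
    using sets by (subst measurable_cong_sets[of _ borel borel borel]) auto
  then have "integral\<^sup>L (blowup \<rho> J) g = (\<integral>x. g (Tmap J x) \<partial>density \<rho> (\<lambda>x. ennreal (h x)))"
    unfolding blowup_def h_def[symmetric] by (rule integral_distr) measurable
  also have "\<dots> = (\<integral>x. h x *\<^sub>R g (Tmap J x) \<partial>\<rho>)"
  proof (rule integral_density)
    show "(\<lambda>x. g (Tmap J x)) \<in> borel_measurable \<rho>"
      by (subst measurable_cong_sets[OF sets refl]) measurable
  qed (fact h_meas | simp add: h_def)+
  also have "\<dots> = dyadic_integral \<rho> J g / measure \<rho> (dy J)"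
    unfolding dyadic_integral_def h_def by (simp flip: integral_divide_zero)
  finally show ?thesis .
qed

lemma mem_dy_iff_Tmap: "x \<in> dy J \<longleftrightarrow> 0 \<le> Tmap J x \<and> Tmap J x < 1"
  by (cases J) (auto simp: dy.simps divide_le_eq less_divide_eq mult.commute)

lemma Tmap_dleft: "Tmap (dleft I) x = 2 * Tmap I x"
  and Tmap_dright: "Tmap (dright I) x = 2 * Tmap I x - 1"
  by (cases I; simp add: algebra_simps)+

lemma indicator_dy_haar_tent:
  "indicator (dy I) x * haar_tent (Tmap I x) =
     (indicator (dy (dright I)) x * tent (Tmap (dright I) x)
      - indicator (dy (dleft I)) x * tent (Tmap (dleft I) x)) / 2"
  by (auto simp: indicator_def haar_tent_def mem_dy_iff_Tmap Tmap_dleft Tmap_dright)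

lemma integrable_indicator_dy_Tmap:
  fixes g :: "real \<Rightarrow> real"
  assumes "finite_measure \<rho>" and "sets \<rho> = sets borel" and "g \<in> borel_measurable borel"
    and "\<And>t. \<bar>g t\<bar> \<le> B"
  shows "integrable \<rho> (\<lambda>x. indicator (dy J) x * g (Tmap J x))"
proof (rule finite_measure.integrable_const_bound[OF assms(1)])
  show "AE x in \<rho>. norm (indicator (dy J) x * g (Tmap J x)) \<le> B"
    using assms(4) order_trans[OF _ assms(4)] by (auto simp: indicator_def)
qed (rule borel_measurable_indicator_dy_Tmap[OF assms(2,3)])

lemma dyadic_integral_haar_tent:
  assumes "finite_measure \<rho>" and "sets \<rho> = sets borel"
  shows "dyadic_integral \<rho> I haar_tent
    = (dyadic_integral \<rho> (dright I) tent - dyadic_integral \<rho> (dleft I) tent) / 2"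
proof -
  have "\<bar>tent t\<bar> \<le> 1" for t
    using tent_nonneg tent_le_1 by simp
  note integrable = integrable_indicator_dy_Tmap[OF assms lip_tests_borel_measurable[OF tent_in_lip_tests] this]
  show ?thesis
    unfolding dyadic_integral_def indicator_dy_haar_tent
    by (simp add: integrable flip: Bochner_Integration.integral_diff)
qed

lemma dyadic_integral_bounds:
  fixes g :: "real \<Rightarrow> real"
  assumes fin: "finite_measure \<rho>" and sets: "sets \<rho> = sets borel" and g: "g \<in> borel_measurable borel"
    and bounds: "\<And>t. lo \<le> g t" "\<And>t. g t \<le> hi" and "lo \<le> 0" "0 \<le> hi"
  shows "lo * measure \<rho> (dy J) \<le> dyadic_integral \<rho> J g"
    and "dyadic_integral \<rho> J g \<le> hi * measure \<rho> (dy J)"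
proof -
  have "\<bar>g t\<bar> \<le> \<bar>lo\<bar> + \<bar>hi\<bar>" for t
    using bounds[of t] by linarith
  note integrable = integrable_indicator_dy_Tmap[OF fin sets g this]
  have integrable_const: "integrable \<rho> (\<lambda>x. indicator (dy J) x * c)" for c :: real
    using integrable_indicator_dy_Tmap[OF fin sets, of "\<lambda>_. c" "\<bar>c\<bar>"] by simp
  have integral_const: "(\<integral>x. indicator (dy J) x * c \<partial>\<rho>) = c * measure \<rho> (dy J)" for c :: real
    using sets_eq_imp_space_eq[OF sets] sets by simp
  show "lo * measure \<rho> (dy J) \<le> dyadic_integral \<rho> J g"
    unfolding dyadic_integral_def integral_const[symmetric]
    by (rule integral_mono[OF integrable_const integrable]) (simp add: bounds indicator_def)
  show "dyadic_integral \<rho> J g \<le> hi * measure \<rho> (dy J)"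
    unfolding dyadic_integral_def integral_const[symmetric]
    by (rule integral_mono[OF integrable integrable_const]) (simp add: bounds indicator_def)
qed

lemma abs_integral_blowup_le:
  fixes g :: "real \<Rightarrow> real"
  assumes fin: "finite_measure \<rho>" and sets: "sets \<rho> = sets borel" and g: "g \<in> borel_measurable borel"
    and bound: "\<And>t. \<bar>g t\<bar> \<le> B"
  shows "\<bar>integral\<^sup>L (blowup \<rho> J) g\<bar> \<le> B"
proof -
  have "0 \<le> B"
    using bound[of 0] by linarith
  have "- B \<le> g t" "g t \<le> B" for t
    using bound[of t] by linarith+
  then have "\<bar>dyadic_integral \<rho> J g\<bar> \<le> B * measure \<rho> (dy J)"
    using dyadic_integral_bounds[OF fin sets g, of "-B" B J] \<open>0 \<le> B\<close> by (simp add: abs_le_iff)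
  then show ?thesis
    using \<open>0 \<le> B\<close> by (auto simp: integral_blowup[OF sets g] abs_div divide_le_eq)
qed

lemma
  assumes "finite_measure \<mu>" "sets \<mu> = sets borel" "finite_measure \<nu>" "sets \<nu> = sets borel"
  shows abs_integral_blowup_diff_le_alpha: "\<psi> \<in> lip_tests \<Longrightarrow>
      \<bar>integral\<^sup>L (blowup \<mu> J) \<psi> - integral\<^sup>L (blowup \<nu> J) \<psi>\<bar> \<le> alpha \<mu> \<nu> J"
    and alpha_nonneg: "0 \<le> alpha \<mu> \<nu> J"
    and alpha_le_4: "alpha \<mu> \<nu> J \<le> 4"
proof -
  have le_4: "\<bar>integral\<^sup>L (blowup \<mu> J) \<psi> - integral\<^sup>L (blowup \<nu> J) \<psi>\<bar> \<le> 4" if "\<psi> \<in> lip_tests" for \<psi>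
    using abs_integral_blowup_le[where J=J, OF assms(1,2) lip_tests_borel_measurable abs_lip_tests_le, OF that that]
      abs_integral_blowup_le[where J=J, OF assms(3,4) lip_tests_borel_measurable abs_lip_tests_le, OF that that]
    by linarith
  show le_alpha: "\<bar>integral\<^sup>L (blowup \<mu> J) \<psi> - integral\<^sup>L (blowup \<nu> J) \<psi>\<bar> \<le> alpha \<mu> \<nu> J"
    if "\<psi> \<in> lip_tests" for \<psi>
    unfolding alpha_eq_SUP_lip_tests using that le_4 by (intro cSUP_upper bdd_aboveI2) auto
  show "0 \<le> alpha \<mu> \<nu> J"
    using le_alpha[OF tent_in_lip_tests] by linarith
  show "alpha \<mu> \<nu> J \<le> 4"
    unfolding alpha_eq_SUP_lip_tests using le_4 tent_in_lip_tests by (intro cSUP_least) auto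
qed

lemma alpha_sq_measure_le:
  assumes "finite_measure \<mu>" "sets \<mu> = sets borel" "finite_measure \<nu>" "sets \<nu> = sets borel"
  shows "ennreal ((alpha \<mu> \<nu> J)\<^sup>2 * measure \<mu> (dy J)) \<le> 16 * ennreal (measure \<mu> (dy J))"
proof -
  have "(alpha \<mu> \<nu> J)\<^sup>2 \<le> 4\<^sup>2"
    using alpha_nonneg[OF assms] alpha_le_4[OF assms] by (intro power_mono) auto
  then have "(alpha \<mu> \<nu> J)\<^sup>2 * measure \<mu> (dy J) \<le> 16 * measure \<mu> (dy J)"
    by (intro mult_right_mono) auto
  then have "ennreal ((alpha \<mu> \<nu> J)\<^sup>2 * measure \<mu> (dy J)) \<le> ennreal (16 * measure \<mu> (dy J))"
    by (rule ennreal_leI)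
  then show ?thesis
    by (simp add: ennreal_mult)
qed

section \<open>The local estimate\<close>

lemma measure_dy_children:
  assumes "finite_measure \<rho>" and "sets \<rho> = sets borel"
  shows "measure \<rho> (dy (dleft I)) + measure \<rho> (dy (dright I)) = measure \<rho> (dy I)"
  using finite_measure.finite_measure_Union[OF assms(1), of "dy (dleft I)" "dy (dright I)"]
    assms(2) dy_children_disjoint dy_children_Un by simp

lemma integral_blowup_haar_tent:
  assumes fin: "finite_measure \<rho>" and sets: "sets \<rho> = sets borel"
  shows "integral\<^sup>L (blowup \<rho> I) haar_tent
    = (measure \<rho> (dy (dright I)) * integral\<^sup>L (blowup \<rho> (dright I)) tent
       - measure \<rho> (dy (dleft I)) * integral\<^sup>L (blowup \<rho> (dleft I)) tent) / (2 * measure \<rho> (dy I))"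
proof -
  have tent_meas: "tent \<in> borel_measurable borel"
    by (rule lip_tests_borel_measurable[OF tent_in_lip_tests])
  have "measure \<rho> (dy J) * integral\<^sup>L (blowup \<rho> J) tent = dyadic_integral \<rho> J tent" for J
    using dyadic_integral_bounds[OF fin sets tent_meas, of 0 1 J] tent_nonneg tent_le_1
    by (cases "measure \<rho> (dy J) = 0") (auto simp: integral_blowup[OF sets tent_meas])
  then show ?thesis
    using integral_blowup[OF sets lip_tests_borel_measurable[OF haar_tent_in_lip_tests]]
      dyadic_integral_haar_tent[OF fin sets] by simp
qed

text \<open>Here \<open>a\<close> and \<open>b\<close> stand for the proportions of mass of \<open>\<mu>\<close> and \<open>\<nu>\<close> in the left child,
  \<open>p, q\<close> and \<open>p', q'\<close> for the normalized tent integrals over the left and the right child, and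
  the parent hypothesis is the test of the blow-ups over \<open>I\<close> with the Haar tent.
  The identity \<open>(a - b) (q + q') = a (q - p) + (1 - a) (p' - q') - X\<close>, with \<open>X\<close> the parent
  difference, turns the three tests into a bound on \<open>|a - b|\<close> once \<open>q, q' \<ge> c\<close>.\<close>

lemma abs_proportion_diff_le:
  fixes a b p q p' q' c A A' A'' :: real
  assumes "0 \<le> a" "a \<le> 1" "0 < c" "c \<le> q" "c \<le> q'"
    and parent: "\<bar>((1 - a) * p' - a * p) - ((1 - b) * q' - b * q)\<bar> \<le> 2 * A"
    and left: "\<bar>p - q\<bar> \<le> A'" and right: "\<bar>p' - q'\<bar> \<le> A''"
  shows "\<bar>a - b\<bar> \<le> (2 * A + a * A' + (1 - a) * A'') / (2 * c)"
proof -
  have identity: "(a - b) * (q + q')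
      = a * (q - p) + (1 - a) * (p' - q') - (((1 - a) * p' - a * p) - ((1 - b) * q' - b * q))"
    by (simp add: algebra_simps)
  have "\<bar>a * (q - p)\<bar> \<le> a * A'" "\<bar>(1 - a) * (p' - q')\<bar> \<le> (1 - a) * A''"
    using assms(1,2) left right by (auto simp: abs_mult abs_minus_commute intro: mult_left_mono)
  have "\<bar>a - b\<bar> * (q + q') = \<bar>(a - b) * (q + q')\<bar>"
    using assms(3-5) by (simp add: abs_mult)
  also have "\<dots> \<le> 2 * A + a * A' + (1 - a) * A''"
    unfolding identity using parent \<open>\<bar>a * (q - p)\<bar> \<le> a * A'\<close> \<open>\<bar>(1 - a) * (p' - q')\<bar> \<le> (1 - a) * A''\<close>
    by linarith
  finally have "\<bar>a - b\<bar> * (q + q') \<le> 2 * A + a * A' + (1 - a) * A''" .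
  moreover have "\<bar>a - b\<bar> * (2 * c) \<le> \<bar>a - b\<bar> * (q + q')"
    using assms(4,5) by (intro mult_left_mono) auto
  ultimately show ?thesis
    using assms(3) by (simp add: le_divide_eq)
qed

lemma square_sum3_le: "((x::real) + y + z)\<^sup>2 \<le> 3 * (x\<^sup>2 + y\<^sup>2 + z\<^sup>2)"
proof -
  have "3 * (x\<^sup>2 + y\<^sup>2 + z\<^sup>2) - (x + y + z)\<^sup>2 = (x - y)\<^sup>2 + (y - z)\<^sup>2 + (x - z)\<^sup>2"
    by (simp add: power2_eq_square algebra_simps)
  then show ?thesis
    by (smt (verit) zero_le_power2)
qed

lemma square_proportion_bound_le:
  fixes a c A A' A'' :: real
  assumes "0 \<le> a" "a \<le> 1"
  shows "((2 * A + a * A' + (1 - a) * A'') / (2 * c))\<^sup>2 \<le> (4 * A\<^sup>2 + a * A'\<^sup>2 + (1 - a) * A''\<^sup>2) / c\<^sup>2"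
proof -
  have "a\<^sup>2 \<le> a" "(1 - a)\<^sup>2 \<le> 1 - a"
    using assms by (simp_all add: power2_eq_square mult_left_le_one_le)
  then have "a\<^sup>2 * A'\<^sup>2 \<le> a * A'\<^sup>2" "(1 - a)\<^sup>2 * A''\<^sup>2 \<le> (1 - a) * A''\<^sup>2"
    by (simp_all add: mult_right_mono)
  then have "(2 * A + a * A' + (1 - a) * A'')\<^sup>2 \<le> 3 * (4 * A\<^sup>2 + a * A'\<^sup>2 + (1 - a) * A''\<^sup>2)"
    using square_sum3_le[of "2 * A" "a * A'" "(1 - a) * A''"] by (simp add: power_mult_distrib)
  then have "(2 * A + a * A' + (1 - a) * A'')\<^sup>2 / (4 * c\<^sup>2)
      \<le> 3 / 4 * ((4 * A\<^sup>2 + a * A'\<^sup>2 + (1 - a) * A''\<^sup>2) / c\<^sup>2)"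
    by (auto intro: divide_right_mono)
  also have "\<dots> \<le> (4 * A\<^sup>2 + a * A'\<^sup>2 + (1 - a) * A''\<^sup>2) / c\<^sup>2"
    using assms by (intro mult_left_le_one_le) auto
  finally show ?thesis
    by (simp add: power_divide power_mult_distrib)
qed

lemma Delta_sq_le:
  assumes fin_\<mu>: "finite_measure \<mu>" and sets_\<mu>: "sets \<mu> = sets borel"
    and fin_\<nu>: "finite_measure \<nu>" and sets_\<nu>: "sets \<nu> = sets borel" and "0 < c"
    and pos: "0 < measure \<nu> (dy (dleft I))" "0 < measure \<nu> (dy (dright I))"
    and tent_left: "c * measure \<nu> (dy (dleft I)) \<le> dyadic_integral \<nu> (dleft I) tent"
    and tent_right: "c * measure \<nu> (dy (dright I)) \<le> dyadic_integral \<nu> (dright I) tent"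
  shows "(Delta \<mu> \<nu> I)\<^sup>2 * measure \<mu> (dy I)
    \<le> (4 * (alpha \<mu> \<nu> I)\<^sup>2 * measure \<mu> (dy I) + (alpha \<mu> \<nu> (dleft I))\<^sup>2 * measure \<mu> (dy (dleft I))
       + (alpha \<mu> \<nu> (dright I))\<^sup>2 * measure \<mu> (dy (dright I))) / c\<^sup>2"
proof (cases "measure \<mu> (dy I) = 0")
  case False
  define m where "m J = measure \<mu> (dy J)" for J
  define n where "n J = measure \<nu> (dy J)" for J
  define p where "p J = integral\<^sup>L (blowup \<mu> J) tent" for J
  define q where "q J = integral\<^sup>L (blowup \<nu> J) tent" for J
  define a where "a = m (dleft I) / m I"
  define b where "b = n (dleft I) / n I"
  have "m I > 0"
    using False by (simp add: m_def zero_less_measure_iff)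
  have m_split: "m (dleft I) + m (dright I) = m I" and n_split: "n (dleft I) + n (dright I) = n I"
    unfolding m_def n_def by (simp_all add: measure_dy_children fin_\<mu> sets_\<mu> fin_\<nu> sets_\<nu>)
  then have "n I > 0"
    using pos by (simp add: n_def)
  have "0 \<le> m (dleft I)" "0 \<le> m (dright I)"
    by (simp_all add: m_def)
  then have a01: "0 \<le> a" "a \<le> 1" and a_compl: "1 - a = m (dright I) / m I"
    using \<open>m I > 0\<close> m_split by (auto simp: a_def field_simps)
  have b_compl: "1 - b = n (dright I) / n I"
    using \<open>n I > 0\<close> n_split by (auto simp: b_def field_simps)
  have tent_meas: "tent \<in> borel_measurable borel"
    by (rule lip_tests_borel_measurable[OF tent_in_lip_tests])
  have q_ge: "c \<le> q J" if "J \<in> {dleft I, dright I}" for J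
    using that tent_left tent_right pos
    by (auto simp: q_def integral_blowup[OF sets_\<nu> tent_meas] le_divide_eq)
  have parent_test: "\<bar>((1 - a) * p (dright I) - a * p (dleft I)) - ((1 - b) * q (dright I) - b * q (dleft I))\<bar>
      \<le> 2 * alpha \<mu> \<nu> I"
    using abs_integral_blowup_diff_le_alpha[OF fin_\<mu> sets_\<mu> fin_\<nu> sets_\<nu> haar_tent_in_lip_tests, of I]
    unfolding integral_blowup_haar_tent[OF fin_\<mu> sets_\<mu>] integral_blowup_haar_tent[OF fin_\<nu> sets_\<nu>]
      a_compl b_compl
    by (simp add: a_def b_def m_def n_def p_def q_def diff_divide_distrib)
  have child_test: "\<bar>p J - q J\<bar> \<le> alpha \<mu> \<nu> J" for J
    unfolding p_def q_def
    by (rule abs_integral_blowup_diff_le_alpha[OF fin_\<mu> sets_\<mu> fin_\<nu> sets_\<nu> tent_in_lip_tests])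
  have "\<bar>a - b\<bar> \<le> (2 * alpha \<mu> \<nu> I + a * alpha \<mu> \<nu> (dleft I)
      + (1 - a) * alpha \<mu> \<nu> (dright I)) / (2 * c)"
    using q_ge by (intro abs_proportion_diff_le[OF a01 \<open>0 < c\<close> _ _ parent_test child_test child_test]) auto
  then have "\<bar>a - b\<bar>\<^sup>2 \<le> (4 * (alpha \<mu> \<nu> I)\<^sup>2 + a * (alpha \<mu> \<nu> (dleft I))\<^sup>2
      + (1 - a) * (alpha \<mu> \<nu> (dright I))\<^sup>2) / c\<^sup>2"
    using square_proportion_bound_le[OF a01] by (meson abs_ge_zero order_trans power_mono)
  then have "\<bar>a - b\<bar>\<^sup>2 * m I \<le> (4 * (alpha \<mu> \<nu> I)\<^sup>2 + a * (alpha \<mu> \<nu> (dleft I))\<^sup>2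
      + (1 - a) * (alpha \<mu> \<nu> (dright I))\<^sup>2) / c\<^sup>2 * m I"
    using \<open>m I > 0\<close> by (intro mult_right_mono) auto
  also have "\<dots> = (4 * (alpha \<mu> \<nu> I)\<^sup>2 * m I + (alpha \<mu> \<nu> (dleft I))\<^sup>2 * (a * m I)
      + (alpha \<mu> \<nu> (dright I))\<^sup>2 * ((1 - a) * m I)) / c\<^sup>2"
    by (simp add: algebra_simps)
  also have "a * m I = m (dleft I)"
    using \<open>m I > 0\<close> by (simp add: a_def)
  also have "(1 - a) * m I = m (dright I)"
    using \<open>m I > 0\<close> a_compl by simp
  finally show ?thesis
    unfolding Delta_def a_def b_def m_def n_def by simp
qed simp

section \<open>Dyadically doubling measures\<close>

lemma dyadic_doubling_child:
  "dyadic_doubling D \<nu> \<Longrightarrow> I \<in> dyadic \<Longrightarrow> J \<in> {dleft I, dright I}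
    \<Longrightarrow> measure \<nu> (dy I) \<le> D * measure \<nu> (dy J)"
  using dleft_in_dyadic dright_in_dyadic dleft_neq_top dright_neq_top
  unfolding dyadic_doubling_def by (metis DiffI dparent_dleft dparent_dright insertE singletonD)

lemma dyadic_doubling_measure_pos:
  assumes "dyadic_doubling D \<nu>" and "0 < measure \<nu> (dy (0, 0))" and "I \<in> dyadic"
  shows "0 < measure \<nu> (dy I)"
proof -
  have "\<forall>j. (k, j) \<in> dyadic \<longrightarrow> 0 < measure \<nu> (dy (k, j))" for k
  proof (induction k)
    case (Suc k)
    show ?case
    proof (intro allI impI)
      fix j
      assume j: "(Suc k, j) \<in> dyadic"
      then have "(k, j div 2) \<in> dyadic"
        by (auto simp: dyadic_def)
      then have "0 < measure \<nu> (dy (dparent (Suc k, j)))"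
        using Suc by simp
      also have "\<dots> \<le> D * measure \<nu> (dy (Suc k, j))"
        using assms(1) j unfolding dyadic_doubling_def by blast
      finally show "0 < measure \<nu> (dy (Suc k, j))"
        by (metis measure_nonneg mult_zero_right order_less_le)
    qed
  qed (use assms(2) in \<open>auto simp: dyadic_def\<close>)
  then show ?thesis
    using assms(3) by (cases I) blast
qed

lemma dyadic_doubling_const_ge_1:
  assumes "finite_measure \<nu>" and "sets \<nu> = sets borel"
    and "dyadic_doubling D \<nu>" and "0 < measure \<nu> (dy (0, 0))"
  shows "1 \<le> D"
proof -
  have "(0, 0) \<in> dyadic"
    by (simp add: dyadic_def)
  then have pos: "0 < measure \<nu> (dy (dleft (0, 0)))"
    by (intro dyadic_doubling_measure_pos[OF assms(3,4) dleft_in_dyadic])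
  have "measure \<nu> (dy (dleft (0, 0))) \<le> measure \<nu> (dy (0, 0))"
    using assms(1,2) by (intro finite_measure.finite_measure_mono dy_dleft_subset) auto
  also have "\<dots> \<le> D * measure \<nu> (dy (dleft (0, 0)))"
    using dyadic_doubling_child[OF assms(3) \<open>(0, 0) \<in> dyadic\<close>] by simp
  finally show ?thesis
    using pos by simp
qed

text \<open>On the grandchild \<open>dright (dleft J)\<close>, i.e. on the second quarter of \<open>J\<close>, the transported
  tent is at least \<open>1/4\<close>; doubling twice bounds the mass of \<open>J\<close> by that of this quarter.\<close>

lemma quarter_le_indicator_dy_tent:
  "indicator (dy (dright (dleft J))) x / 4 \<le> indicator (dy J) x * tent (Tmap J x)"
  using tent_nonneg[of "Tmap J x"]
  by (auto simp: indicator_def mem_dy_iff_Tmap Tmap_dleft Tmap_dright tent_def)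

lemma dyadic_integral_tent_ge:
  assumes fin: "finite_measure \<nu>" and sets: "sets \<nu> = sets borel"
    and doubling: "dyadic_doubling D \<nu>" and top: "0 < measure \<nu> (dy (0, 0))" and J: "J \<in> dyadic"
  shows "measure \<nu> (dy J) / (4 * D\<^sup>2) \<le> dyadic_integral \<nu> J tent"
proof -
  define G where "G = dright (dleft J)"
  have "1 \<le> D"
    using dyadic_doubling_const_ge_1[OF fin sets doubling top] .
  have "measure \<nu> (dy J) \<le> D * measure \<nu> (dy (dleft J))"
    using dyadic_doubling_child[OF doubling J] by simp
  also have "\<dots> \<le> D * (D * measure \<nu> (dy G))"
    using dyadic_doubling_child[OF doubling dleft_in_dyadic[OF J], of G] \<open>1 \<le> D\<close>
    by (simp add: G_def)
  finally have "measure \<nu> (dy J) / (4 * D\<^sup>2) \<le> measure \<nu> (dy G) / 4"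
    using \<open>1 \<le> D\<close> by (simp add: divide_le_eq power2_eq_square ac_simps)
  also have "\<dots> = (\<integral>x. indicator (dy G) x / 4 \<partial>\<nu>)"
    using sets_eq_imp_space_eq[OF sets] sets by simp
  also have "\<dots> \<le> dyadic_integral \<nu> J tent"
    unfolding dyadic_integral_def G_def
  proof (rule integral_mono[OF _ _ quarter_le_indicator_dy_tent])
    show "integrable \<nu> (\<lambda>x. indicator (dy (dright (dleft J))) x / (4::real))"
      using integrable_indicator_dy_Tmap[OF fin sets, of "\<lambda>_. 1 / 4" "1 / 4"] by simp
    show "integrable \<nu> (\<lambda>x. indicator (dy J) x * tent (Tmap J x))"
      using tent_nonneg tent_le_1 lip_tests_borel_measurable[OF tent_in_lip_tests]
      by (intro integrable_indicator_dy_Tmap[OF fin sets, of _ 1]) auto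
  qed
  finally show ?thesis .
qed

lemma Delta_sq_le_doubling:
  assumes fin_\<mu>: "finite_measure \<mu>" and sets_\<mu>: "sets \<mu> = sets borel"
    and fin_\<nu>: "finite_measure \<nu>" and sets_\<nu>: "sets \<nu> = sets borel"
    and doubling: "dyadic_doubling D \<nu>" and top: "0 < measure \<nu> (dy (0, 0))" and I: "I \<in> dyadic"
  shows "ennreal ((Delta \<mu> \<nu> I)\<^sup>2 * measure \<mu> (dy I))
    \<le> ennreal (16 * D ^ 4) * (4 * ennreal ((alpha \<mu> \<nu> I)\<^sup>2 * measure \<mu> (dy I))
       + ennreal ((alpha \<mu> \<nu> (dleft I))\<^sup>2 * measure \<mu> (dy (dleft I)))
       + ennreal ((alpha \<mu> \<nu> (dright I))\<^sup>2 * measure \<mu> (dy (dright I))))"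
proof -
  have "1 \<le> D"
    by (rule dyadic_doubling_const_ge_1[OF fin_\<nu> sets_\<nu> doubling top])
  have "(1 / (4 * D\<^sup>2))\<^sup>2 = 1 / (16 * D ^ 4)"
    by (simp add: power_divide power_mult_distrib flip: power_mult)
  moreover have "(Delta \<mu> \<nu> I)\<^sup>2 * measure \<mu> (dy I)
    \<le> (4 * (alpha \<mu> \<nu> I)\<^sup>2 * measure \<mu> (dy I) + (alpha \<mu> \<nu> (dleft I))\<^sup>2 * measure \<mu> (dy (dleft I))
       + (alpha \<mu> \<nu> (dright I))\<^sup>2 * measure \<mu> (dy (dright I))) / (1 / (4 * D\<^sup>2))\<^sup>2"
    using \<open>1 \<le> D\<close> dleft_in_dyadic[OF I] dright_in_dyadic[OF I]
    by (intro Delta_sq_le[OF fin_\<mu> sets_\<mu> fin_\<nu> sets_\<nu>])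
      (simp_all add: dyadic_doubling_measure_pos[OF doubling top]
        dyadic_integral_tent_ge[OF fin_\<nu> sets_\<nu> doubling top])
  ultimately have "(Delta \<mu> \<nu> I)\<^sup>2 * measure \<mu> (dy I)
    \<le> 16 * D ^ 4 * (4 * ((alpha \<mu> \<nu> I)\<^sup>2 * measure \<mu> (dy I))
       + (alpha \<mu> \<nu> (dleft I))\<^sup>2 * measure \<mu> (dy (dleft I))
       + (alpha \<mu> \<nu> (dright I))\<^sup>2 * measure \<mu> (dy (dright I)))"
    by (simp add: mult_ac)
  then have "ennreal ((Delta \<mu> \<nu> I)\<^sup>2 * measure \<mu> (dy I))
    \<le> ennreal (16 * D ^ 4 * (4 * ((alpha \<mu> \<nu> I)\<^sup>2 * measure \<mu> (dy I))
       + (alpha \<mu> \<nu> (dleft I))\<^sup>2 * measure \<mu> (dy (dleft I))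
       + (alpha \<mu> \<nu> (dright I))\<^sup>2 * measure \<mu> (dy (dright I))))"
    by (rule ennreal_leI)
  then show ?thesis
    by (simp add: ennreal_mult ennreal_plus)
qed

section \<open>Summation over a tree\<close>

lemma summable_on_ennreal_fun [simp]: "(f :: 'a \<Rightarrow> ennreal) summable_on A"
  by (rule nonneg_summable_on_complete) simp

lemma infsum_cmult_le_ennreal: "(\<Sum>\<^sub>\<infinity>x\<in>A. (c::ennreal) * f x) \<le> c * (\<Sum>\<^sub>\<infinity>x\<in>A. f x)"
proof (rule infsum_le_finite_sums)
  fix F
  assume "finite F" "F \<subseteq> A"
  then have "sum f F = (\<Sum>\<^sub>\<infinity>x\<in>F. f x)"
    by simp
  also have "\<dots> \<le> (\<Sum>\<^sub>\<infinity>x\<in>A. f x)"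
    using \<open>F \<subseteq> A\<close> by (intro infsum_mono_neutral) auto
  finally have "sum f F \<le> (\<Sum>\<^sub>\<infinity>x\<in>A. f x)" .
  then show "(\<Sum>x\<in>F. c * f x) \<le> c * (\<Sum>\<^sub>\<infinity>x\<in>A. f x)"
    by (simp add: mult_left_mono flip: sum_distrib_left)
qed simp

lemma infsum_measure_dy_le:
  assumes fin: "finite_measure \<mu>" and sets: "sets \<mu> = sets borel"
    and sub: "\<And>I. I \<in> F \<Longrightarrow> dy I \<subseteq> S" and disj: "disjoint_family_on dy F" and "S \<in> sets borel"
  shows "(\<Sum>\<^sub>\<infinity>I\<in>F. ennreal (measure \<mu> (dy I))) \<le> ennreal (measure \<mu> S)"
proof (rule infsum_le_finite_sums)
  fix G
  assume G: "finite G" "G \<subseteq> F"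
  have "(\<Sum>I\<in>G. ennreal (measure \<mu> (dy I))) = (\<Sum>I\<in>G. emeasure \<mu> (dy I))"
    by (simp add: finite_measure.emeasure_eq_measure[OF fin])
  also have "\<dots> = emeasure \<mu> (\<Union>I\<in>G. dy I)"
    using G disjoint_family_on_mono[OF G(2) disj] sets by (intro sum_emeasure) auto
  also have "\<dots> \<le> emeasure \<mu> S"
    using G sub sets \<open>S \<in> sets borel\<close> by (intro emeasure_mono) auto
  finally show "(\<Sum>I\<in>G. ennreal (measure \<mu> (dy I))) \<le> ennreal (measure \<mu> S)"
    by (simp add: finite_measure.emeasure_eq_measure[OF fin])
qed simp

lemma infsum_le_cmult_measure:
  fixes f :: "nat \<times> nat \<Rightarrow> ennreal"
  assumes fin: "finite_measure \<mu>" and sets: "sets \<mu> = sets borel"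
    and f_le: "\<And>J. f J \<le> B * ennreal (measure \<mu> (dy J))"
    and "\<And>J. J \<in> F \<Longrightarrow> dy J \<subseteq> S" and "disjoint_family_on dy F" and "S \<in> sets borel"
  shows "(\<Sum>\<^sub>\<infinity>J\<in>F. f J) \<le> B * ennreal (measure \<mu> S)"
proof -
  have "(\<Sum>\<^sub>\<infinity>J\<in>F. f J) \<le> (\<Sum>\<^sub>\<infinity>J\<in>F. B * ennreal (measure \<mu> (dy J)))"
    using f_le by (intro infsum_mono) auto
  also have "\<dots> \<le> B * (\<Sum>\<^sub>\<infinity>J\<in>F. ennreal (measure \<mu> (dy J)))"
    by (rule infsum_cmult_le_ennreal)
  also have "\<dots> \<le> B * ennreal (measure \<mu> S)"
    using infsum_measure_dy_le[OF fin sets] assms(4-6) by (intro mult_left_mono) auto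
  finally show ?thesis .
qed

lemma infsum_tree_le:
  fixes f :: "nat \<times> nat \<Rightarrow> ennreal"
  assumes T: "is_tree T" and "finite_measure \<mu>" and "sets \<mu> = sets borel"
    and "\<And>J. f J \<le> B * ennreal (measure \<mu> (dy J))"
  shows "(\<Sum>\<^sub>\<infinity>I\<in>T. f I) \<le> (\<Sum>\<^sub>\<infinity>I\<in>T - leaves T. f I) + B * ennreal (measure \<mu> (dy (tree_top T)))"
proof -
  have "leaves T \<subseteq> T"
    by (auto simp: leaves_def)
  then have "(\<Sum>\<^sub>\<infinity>I\<in>T. f I) = (\<Sum>\<^sub>\<infinity>I\<in>(T - leaves T) \<union> leaves T. f I)"
    by (simp add: Un_absorb2)
  also have "\<dots> = (\<Sum>\<^sub>\<infinity>I\<in>T - leaves T. f I) + (\<Sum>\<^sub>\<infinity>I\<in>leaves T. f I)"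
    by (rule infsum_Un_disjoint) auto
  also have "(\<Sum>\<^sub>\<infinity>I\<in>leaves T. f I) \<le> B * ennreal (measure \<mu> (dy (tree_top T)))"
    using dy_subset_tree_top[OF T] \<open>leaves T \<subseteq> T\<close>
    by (intro infsum_le_cmult_measure[OF assms(2-4) _ disjoint_family_leaves[OF T]]) (blast, simp)
  finally show ?thesis
    by (simp add: add_left_mono)
qed

lemma infsum_tree_children_le:
  fixes f :: "nat \<times> nat \<Rightarrow> ennreal"
  assumes T: "is_tree T" and "finite_measure \<mu>" and "sets \<mu> = sets borel"
    and "\<And>J. f J \<le> B * ennreal (measure \<mu> (dy J))"
  shows "(\<Sum>\<^sub>\<infinity>I\<in>T. f (dleft I)) + (\<Sum>\<^sub>\<infinity>I\<in>T. f (dright I))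
    \<le> (\<Sum>\<^sub>\<infinity>I\<in>T. f I) + B * ennreal (measure \<mu> (dy (tree_top T)))"
proof -
  define C where "C = dleft ` T \<union> dright ` T"
  have "(\<Sum>\<^sub>\<infinity>I\<in>T. f (dleft I)) + (\<Sum>\<^sub>\<infinity>I\<in>T. f (dright I)) = (\<Sum>\<^sub>\<infinity>J\<in>C. f J)"
  proof -
    have "dleft ` T \<inter> dright ` T = {}"
      using dleft_neq_dright by blast
    then show ?thesis
      using infsum_reindex[OF inj_on_subset[OF inj_dleft], of T f]
        infsum_reindex[OF inj_on_subset[OF inj_dright], of T f]
      by (simp add: C_def comp_def infsum_Un_disjoint)
  qed
  also have "\<dots> = (\<Sum>\<^sub>\<infinity>J\<in>(C \<inter> T) \<union> (C - T). f J)"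
    by (simp add: Int_Diff_Un)
  also have "\<dots> = (\<Sum>\<^sub>\<infinity>J\<in>C \<inter> T. f J) + (\<Sum>\<^sub>\<infinity>J\<in>C - T. f J)"
    by (rule infsum_Un_disjoint) auto
  also have "\<dots> \<le> (\<Sum>\<^sub>\<infinity>I\<in>T. f I) + B * ennreal (measure \<mu> (dy (tree_top T)))"
  proof (rule add_mono)
    show "(\<Sum>\<^sub>\<infinity>J\<in>C \<inter> T. f J) \<le> (\<Sum>\<^sub>\<infinity>I\<in>T. f I)"
      by (intro infsum_mono_neutral) auto
    have "dy J \<subseteq> dy (tree_top T)" if "J \<in> C - T" for J
    proof -
      from that have "J \<in> dleft ` T \<union> dright ` T - T"
        by (simp add: C_def)
      then obtain L where L: "L \<in> leaves T" "J = dleft L \<or> J = dright L"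
        by (rule children_outside_tree[OF T])
      then have "dy L \<subseteq> dy (tree_top T)"
        using dy_subset_tree_top[OF T] by (simp add: leaves_def)
      then show ?thesis
        using L(2) dy_dleft_subset dy_dright_subset by blast
    qed
    then show "(\<Sum>\<^sub>\<infinity>J\<in>C - T. f J) \<le> B * ennreal (measure \<mu> (dy (tree_top T)))"
      by (intro infsum_le_cmult_measure[OF assms(2-4) _ disjoint_family_children_outside_tree[OF T, folded C_def]])
        (blast, simp)
  qed
  finally show ?thesis .
qed

lemma infsum_tree_bound:
  fixes f g :: "nat \<times> nat \<Rightarrow> ennreal"
  assumes T: "is_tree T" and fin: "finite_measure \<mu>" and sets: "sets \<mu> = sets borel"
    and f_le: "\<And>J. f J \<le> B * ennreal (measure \<mu> (dy J))"
    and g_le: "\<And>I. I \<in> T \<Longrightarrow> g I \<le> K * (4 * f I + f (dleft I) + f (dright I))"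
  shows "(\<Sum>\<^sub>\<infinity>I\<in>T. g I)
    \<le> K * (5 + 6 * B) * ((\<Sum>\<^sub>\<infinity>I\<in>T - leaves T. f I) + ennreal (measure \<mu> (dy (tree_top T))))"
proof -
  define S where "S = (\<Sum>\<^sub>\<infinity>I\<in>T - leaves T. f I)"
  define t where "t = ennreal (measure \<mu> (dy (tree_top T)))"
  have "(\<Sum>\<^sub>\<infinity>I\<in>T. g I) \<le> (\<Sum>\<^sub>\<infinity>I\<in>T. K * (4 * f I + f (dleft I) + f (dright I)))"
    using g_le by (intro infsum_mono) auto
  also have "\<dots> \<le> K * (\<Sum>\<^sub>\<infinity>I\<in>T. 4 * f I + f (dleft I) + f (dright I))"
    by (rule infsum_cmult_le_ennreal)
  also have "(\<Sum>\<^sub>\<infinity>I\<in>T. 4 * f I + f (dleft I) + f (dright I))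
      = (\<Sum>\<^sub>\<infinity>I\<in>T. 4 * f I) + ((\<Sum>\<^sub>\<infinity>I\<in>T. f (dleft I)) + (\<Sum>\<^sub>\<infinity>I\<in>T. f (dright I)))"
    by (simp add: infsum_add add.assoc)
  also have "\<dots> \<le> 4 * (\<Sum>\<^sub>\<infinity>I\<in>T. f I) + ((\<Sum>\<^sub>\<infinity>I\<in>T. f I) + B * t)"
    unfolding t_def by (rule add_mono[OF infsum_cmult_le_ennreal infsum_tree_children_le[OF T fin sets f_le]])
  also have "\<dots> \<le> 4 * (S + B * t) + ((S + B * t) + B * t)"
    using infsum_tree_le[OF T fin sets f_le] by (intro add_mono mult_left_mono) (simp_all add: S_def t_def)
  also have "\<dots> = 5 * S + 6 * (B * t)"
  proof -
    have five: "(5::ennreal) = 4 + 1" and six: "(6::ennreal) = 4 + 1 + 1"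
      by simp_all
    show ?thesis
      unfolding five six by (simp only: distrib_right distrib_left mult_1_left add_ac)
  qed
  also have "\<dots> \<le> (5 + 6 * B) * (S + t)"
    by (simp add: distrib_left distrib_right add_mono add_ac mult_ac)
  finally show ?thesis
    by (simp add: S_def t_def mult_left_mono mult.assoc)
qed

lemma infsum_Delta_sq_le:
  assumes fin: "finite_measure \<mu>" "sets \<mu> = sets borel" "finite_measure \<nu>" "sets \<nu> = sets borel"
    and doubling: "dyadic_doubling D \<nu>" and top: "0 < measure \<nu> (dy (0, 0))" and T: "is_tree T"
  shows "(\<Sum>\<^sub>\<infinity>I\<in>T. ennreal ((Delta \<mu> \<nu> I)\<^sup>2 * measure \<mu> (dy I)))
    \<le> ennreal (1616 * D ^ 4) * ((\<Sum>\<^sub>\<infinity>I\<in>T - leaves T. ennreal ((alpha \<mu> \<nu> I)\<^sup>2 * measure \<mu> (dy I)))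
                                + ennreal (measure \<mu> (dy (tree_top T))))"
proof -
  have "T \<subseteq> dyadic"
    using T by (simp add: is_tree_def)
  then have "(\<Sum>\<^sub>\<infinity>I\<in>T. ennreal ((Delta \<mu> \<nu> I)\<^sup>2 * measure \<mu> (dy I)))
    \<le> ennreal (16 * D ^ 4) * (5 + 6 * 16) * ((\<Sum>\<^sub>\<infinity>I\<in>T - leaves T. ennreal ((alpha \<mu> \<nu> I)\<^sup>2 * measure \<mu> (dy I)))
                                + ennreal (measure \<mu> (dy (tree_top T))))"
    using alpha_sq_measure_le[OF fin] Delta_sq_le_doubling[OF fin doubling top]
    by (intro infsum_tree_bound[OF T fin(1,2)]) auto
  also have "ennreal (16 * D ^ 4) * (5 + 6 * 16) = ennreal (16 * D ^ 4) * ennreal 101"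
    by simp
  also have "\<dots> = ennreal (1616 * D ^ 4)"
    by (subst ennreal_mult''[symmetric]) simp_all
  finally show ?thesis .
qed

theorem mainTheorem6:
  fixes D\<^sub>\<nu> D :: real
  assumes "D \<ge> 1"
  shows "\<exists>C::real. \<forall>(\<mu>::real measure) (\<nu>::real measure) T.
    prob_space \<mu> \<and> sets \<mu> = sets borel \<and> emeasure \<mu> {0..<1} = 1 \<and>
    prob_space \<nu> \<and> sets \<nu> = sets borel \<and> emeasure \<nu> {0..<1} = 1 \<and>
    (\<forall>k j::nat. measure \<mu> {real j / 2 ^ k} = 0) \<and>
    dyadic_doubling D\<^sub>\<nu> \<nu> \<and>
    is_tree T \<and> tree_doubling T D \<mu>
    \<longrightarrow>
    (\<Sum>\<^sub>\<infinity>I\<in>T. ennreal ((Delta \<mu> \<nu> I)\<^sup>2 * measure \<mu> (dy I)))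
      \<le> ennreal C * ((\<Sum>\<^sub>\<infinity>I\<in>T - leaves T. ennreal ((alpha \<mu> \<nu> I)\<^sup>2 * measure \<mu> (dy I)))
                      + ennreal (measure \<mu> (dy (tree_top T))))"
proof (intro exI[of _ "1616 * D\<^sub>\<nu> ^ 4"] allI impI, elim conjE)
  fix \<mu> \<nu> :: "real measure" and T
  assume "prob_space \<mu>" "sets \<mu> = sets borel" "emeasure \<mu> {0..<1} = 1"
    and "prob_space \<nu>" "sets \<nu> = sets borel" "emeasure \<nu> {0..<1} = 1"
    and "\<forall>k j::nat. measure \<mu> {real j / 2 ^ k} = 0" "dyadic_doubling D\<^sub>\<nu> \<nu>"
    and "is_tree T" "tree_doubling T D \<mu>"
  moreover have "0 < measure \<nu> (dy (0, 0))"
    using \<open>emeasure \<nu> {0..<1} = 1\<close> by (simp add: dy.simps measure_def)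
  ultimately show "(\<Sum>\<^sub>\<infinity>I\<in>T. ennreal ((Delta \<mu> \<nu> I)\<^sup>2 * measure \<mu> (dy I)))
      \<le> ennreal (1616 * D\<^sub>\<nu> ^ 4) * ((\<Sum>\<^sub>\<infinity>I\<in>T - leaves T. ennreal ((alpha \<mu> \<nu> I)\<^sup>2 * measure \<mu> (dy I)))
                      + ennreal (measure \<mu> (dy (tree_top T))))"
    by (intro infsum_Delta_sq_le) (simp_all add: prob_space.finite_measure)
qed

end
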